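(* Let $n$ be a positive even integer and let $A\in\mathbb{M}_n(\mathbb{F}_3)$ be a non-derogatory matrix with $\operatorname{Trace}(A)=0$. Then there exists $M\in\mathbb{M}_n(\mathbb{F}_3)$ with $M^2=0$ such that $A+M$ is diagonalizable over $\mathbb{F}_3$.
   Context: $\mathbb{F}_3$ is the field with three elements. A square matrix is non-derogatory if its minimal polynomial equals its characteristic polynomial. A matrix $X\in\mathbb{M}_n(\mathbb{F}_3)$ is diagonalizable if there is an invertible $U\in\mathbb{M}_n(\mathbb{F}_3)$ with $U^{-1}XU$ diagonal. *)

theory Defs
  imports "Jordan_Normal_Form.Char_Poly"
begin

definition mat_trace :: "'a :: comm_ring_1 mat \<Rightarrow> 'a" where
  "mat_trace A = (\<Sum>i<dim_row A. A $$ (i, i))"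

definition poly_mat_eval :: "nat \<Rightarrow> 'a :: comm_ring_1 poly \<Rightarrow> 'a mat \<Rightarrow> 'a mat" where
  "poly_mat_eval n p A = fold (\<lambda>i B. B + coeff p i \<cdot>\<^sub>m (A ^\<^sub>m i)) [0..<Suc (degree p)] (0\<^sub>m n n)"

definition is_minimal_poly :: "nat \<Rightarrow> 'a :: field mat \<Rightarrow> 'a poly \<Rightarrow> bool" where
  "is_minimal_poly n A p \<longleftrightarrow>
     monic p \<and> poly_mat_eval n p A = 0\<^sub>m n n \<and>
     (\<forall>q. q \<noteq> 0 \<and> poly_mat_eval n q A = 0\<^sub>m n n \<longrightarrow> degree p \<le> degree q)"

definition non_derogatory :: "nat \<Rightarrow> 'a :: field mat \<Rightarrow> bool" where
  "non_derogatory n A \<longleftrightarrow> is_minimal_poly n A (char_poly A)"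

definition diagonalizable :: "nat \<Rightarrow> 'a :: field mat \<Rightarrow> bool" where
  "diagonalizable n X \<longleftrightarrow>
     (\<exists>U V. U \<in> carrier_mat n n \<and> V \<in> carrier_mat n n \<and>
            U * V = 1\<^sub>m n \<and> V * U = 1\<^sub>m n \<and> diagonal_mat (V * X * U))"

end

theory Submission
  imports Defs
begin

text \<open>
  Since A is non-derogatory it has a cyclic vector v. For nodes c_0, c_1, ... put
  b_i = (x - c_0) ... (x - c_(i-1)); in the basis b_0(A) v, ..., b_(n-1)(A) v the matrix A becomes
  a companion-type matrix T with the nodes on the diagonal, ones on the subdiagonal and -r_i in the
  last column, where char_poly A = b_n + sum r_i b_i. Choose c_i = eps for odd i and c_i different
  from eps for even i. Adding the square-zero matrix N supported on even rows and odd columns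
  deletes the subdiagonal ones in odd columns and the last-column entries in even rows. The result
  consists of lower triangular 2 x 2 blocks with distinct eigenvalues, coupled only through the odd
  entries of the last column, and it is diagonalizable as soon as r_(n-1) is nonzero and
  c_(n-2) differs from eps - r_(n-1). The trace condition forces r_(n-1) = sum c_i, and nodes
  with sum c_i = 1 exist in every field with 1 different from -1, such as F_3. Conjugating N back
  to the original basis gives M.
\<close>

lemma sum_lessThan_eq_single:
  fixes f :: "nat \<Rightarrow> 'a :: comm_monoid_add"
  assumes "a < n" and "\<And>j. j < n \<Longrightarrow> j \<noteq> a \<Longrightarrow> f j = 0"
  shows "(\<Sum>j<n. f j) = f a"
proof -
  have "(\<Sum>j<n. f j) = (\<Sum>j\<in>{a}. f j)"
    using assms by (intro sum.mono_neutral_right) auto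
  then show ?thesis
    by simp
qed

lemma zero_mat_mult_vec [simp]:
  "u \<in> carrier_vec m \<Longrightarrow> (0\<^sub>m n m :: 'a :: semiring_0 mat) *\<^sub>v u = 0\<^sub>v n"
  by (rule eq_vecI) (auto simp: scalar_prod_def)

lemma mult_mat_vec_uminus:
  "A \<in> carrier_mat m n \<Longrightarrow> (w :: 'a :: ring vec) \<in> carrier_vec n \<Longrightarrow> A *\<^sub>v (- w) = - (A *\<^sub>v w)"
  by (rule eq_vecI) auto

lemma add_eq_0_vec_imp_eq_uminus:
  fixes x y :: "'a :: ab_group_add vec"
  assumes "x \<in> carrier_vec n" "y \<in> carrier_vec n" "x + y = 0\<^sub>v n"
  shows "x = - y"
proof (rule eq_vecI)
  fix i assume "i < dim_vec (- y)"
  then have i: "i < n"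
    using assms(2) by (simp add: carrier_vecD)
  have "x $ i + y $ i = 0"
    using arg_cong[OF assms(3), of "\<lambda>v. v $ i"] i assms(1,2) by simp
  then show "x $ i = (- y) $ i"
    using i assms(2) by (simp add: eq_neg_iff_add_eq_0)
qed (use assms in simp)

lemma mat_eq_0_if_mult_vec_eq_0:
  fixes X :: "'a :: semiring_1 mat"
  assumes X: "X \<in> carrier_mat m n" and zero: "\<And>u. u \<in> carrier_vec n \<Longrightarrow> X *\<^sub>v u = 0\<^sub>v m"
  shows "X = 0\<^sub>m m n"
proof (rule eq_matI)
  fix i j assume ij: "i < dim_row (0\<^sub>m m n :: 'a mat)" "j < dim_col (0\<^sub>m m n :: 'a mat)"
  then have "(X *\<^sub>v unit_vec n j) $ i = 0"
    using zero[of "unit_vec n j"] by simp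
  then show "X $$ (i, j) = 0\<^sub>m m n $$ (i, j)"
    using X ij by simp
qed (use X in auto)

lemma pow_mat_Suc_left:
  assumes "A \<in> carrier_mat n n"
  shows "A ^\<^sub>m Suc k = A * A ^\<^sub>m k"
proof (induction k)
  case (Suc k)
  have "A ^\<^sub>m Suc (Suc k) = A * A ^\<^sub>m k * A"
    using Suc by simp
  also have "\<dots> = A * A ^\<^sub>m Suc k"
    using assms by (simp add: assoc_mult_mat[of _ n n _ n _ n])
  finally show ?case .
qed (use assms in simp)

lemma mat_inverse_if_injective:
  fixes X :: "'a :: field mat"
  assumes X: "X \<in> carrier_mat n n" and inj: "\<And>x. x \<in> carrier_vec n \<Longrightarrow> X *\<^sub>v x = 0\<^sub>v n \<Longrightarrow> x = 0\<^sub>v n"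
  obtains Y where "Y \<in> carrier_mat n n" "X * Y = 1\<^sub>m n" "Y * X = 1\<^sub>m n"
proof -
  have "det X \<noteq> 0"
    using det_0_iff_vec_prod_zero_field[OF X] inj by auto
  then have "X \<in> Units (ring_mat TYPE('a) n ())"
    by (rule det_non_zero_imp_unit[OF X])
  then show ?thesis
    using that by (auto simp: Units_def ring_mat_def)
qed

lemma mat_trace_mult_comm:
  fixes X :: "'a :: comm_ring_1 mat"
  assumes X: "X \<in> carrier_mat n m" and Y: "Y \<in> carrier_mat m n"
  shows "mat_trace (X * Y) = mat_trace (Y * X)"
proof -
  have "mat_trace (X * Y) = (\<Sum>i<n. \<Sum>k<m. X $$ (i, k) * Y $$ (k, i))"
    using X Y by (simp add: mat_trace_def scalar_prod_def atLeast0LessThan)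
  also have "\<dots> = (\<Sum>k<m. \<Sum>i<n. Y $$ (k, i) * X $$ (i, k))"
    by (subst sum.swap) (simp add: ac_simps)
  also have "\<dots> = mat_trace (Y * X)"
    using X Y by (simp add: mat_trace_def scalar_prod_def atLeast0LessThan)
  finally show ?thesis .
qed

lemma mat_trace_similar:
  fixes A :: "'a :: comm_ring_1 mat"
  assumes "similar_mat A B"
  shows "mat_trace A = mat_trace B"
proof -
  obtain n P Q where carrier: "B \<in> carrier_mat n n" "P \<in> carrier_mat n n" "Q \<in> carrier_mat n n"
    and QP: "Q * P = 1\<^sub>m n" and A: "A = P * B * Q"
    using similar_matD[OF assms] by auto
  have "mat_trace A = mat_trace (Q * (P * B))"
    unfolding A using carrier by (intro mat_trace_mult_comm) auto
  also have "\<dots> = mat_trace B"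
    using carrier QP by (simp add: assoc_mult_mat[of Q n n P n B n, symmetric])
  finally show ?thesis .
qed

lemma mat_mult_self_eq_0_if_support:
  fixes M :: "'a :: semiring_0 mat"
  assumes M: "M \<in> carrier_mat n n"
    and support: "\<And>i j. i < n \<Longrightarrow> j < n \<Longrightarrow> M $$ (i, j) \<noteq> 0 \<Longrightarrow> S i \<and> \<not> S j"
  shows "M * M = 0\<^sub>m n n"
proof (rule eq_matI)
  fix i j assume "i < dim_row (0\<^sub>m n n :: 'a mat)" "j < dim_col (0\<^sub>m n n :: 'a mat)"
  then have ij: "i < n" "j < n"
    by simp_all
  have "M $$ (i, l) * M $$ (l, j) = 0" if "l < n" for l
    using support[OF ij(1) that] support[OF that ij(2)] by fastforce
  then show "(M * M) $$ (i, j) = 0\<^sub>m n n $$ (i, j)"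
    using M ij by (simp add: scalar_prod_def)
qed (use M in auto)

lemma similar_mat_add_square_zero:
  fixes A :: "'a :: comm_ring_1 mat"
  assumes "similar_mat A B" and A: "A \<in> carrier_mat n n"
    and N: "N \<in> carrier_mat n n" "N * N = 0\<^sub>m n n"
  obtains M where "M \<in> carrier_mat n n" "M * M = 0\<^sub>m n n" "similar_mat (A + M) (B + N)"
proof -
  obtain m P Q where carrier: "B \<in> carrier_mat m m" "P \<in> carrier_mat m m" "Q \<in> carrier_mat m m"
    and PQ: "P * Q = 1\<^sub>m m" "Q * P = 1\<^sub>m m" and AB: "A = P * B * Q"
    using similar_matD[OF assms(1)] by auto
  have "m = n"
    using A carrier AB by auto
  define M where "M = P * N * Q"
  have M: "M \<in> carrier_mat n n"
    using carrier N \<open>m = n\<close> by (simp add: M_def)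
  have "M * M = P * (N * (Q * P) * N) * Q"
    using carrier N \<open>m = n\<close> by (simp add: M_def assoc_mult_mat[of _ n n _ n _ n])
  also have "\<dots> = 0\<^sub>m n n"
    using carrier N PQ \<open>m = n\<close> by simp
  finally have MM: "M * M = 0\<^sub>m n n" .
  have "P * (B + N) * Q = (P * B + P * N) * Q"
    using carrier N \<open>m = n\<close> by (simp add: mult_add_distrib_mat[of P n n])
  also have "\<dots> = A + M"
    using carrier N \<open>m = n\<close> by (simp add: AB M_def add_mult_distrib_mat[of _ n n _ Q n])
  finally have "similar_mat (A + M) (B + N)"
    using carrier N PQ M A \<open>m = n\<close> by (intro similar_matI[of _ _ P Q n]) auto
  with M MM show ?thesis
    by (rule that)
qed

lemma diagonalizable_similar:
  fixes X :: "'a :: field mat"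
  assumes "similar_mat X Y" and X: "X \<in> carrier_mat n n" and "diagonalizable n Y"
  shows "diagonalizable n X"
proof -
  obtain m P Q where carrier: "Y \<in> carrier_mat m m" "P \<in> carrier_mat m m" "Q \<in> carrier_mat m m"
    and PQ: "P * Q = 1\<^sub>m m" "Q * P = 1\<^sub>m m" and XY: "X = P * Y * Q"
    using similar_matD[OF assms(1)] by auto
  have "m = n"
    using X carrier XY by auto
  obtain U V where UV: "U \<in> carrier_mat n n" "V \<in> carrier_mat n n" "U * V = 1\<^sub>m n" "V * U = 1\<^sub>m n"
    and diag: "diagonal_mat (V * Y * U)"
    using assms(3) unfolding diagonalizable_def by blast
  note [simp] = assoc_mult_mat[of _ n n _ n _ n]
  have "(V * Q) * X * (P * U) = V * (Q * P) * Y * (Q * P) * U"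
    using carrier UV \<open>m = n\<close> XY by simp
  also have "\<dots> = V * Y * U"
    using carrier UV PQ \<open>m = n\<close> by simp
  finally have "diagonal_mat ((V * Q) * X * (P * U))"
    using diag by simp
  moreover have "(P * U) * (V * Q) = 1\<^sub>m n" "(V * Q) * (P * U) = 1\<^sub>m n"
    using carrier UV PQ \<open>m = n\<close> by (simp_all add: assoc_mult_mat[of _ n n _ n _ n, symmetric])
  ultimately show ?thesis
    unfolding diagonalizable_def using carrier UV \<open>m = n\<close> by (intro exI[of _ "P * U"] exI[of _ "V * Q"]) auto
qed

lemma diagonalizable_if_eigenbasis:
  fixes X :: "'a :: field mat"
  assumes X: "X \<in> carrier_mat n n" and U: "U \<in> carrier_mat n n"
    and inj: "\<And>x. x \<in> carrier_vec n \<Longrightarrow> U *\<^sub>v x = 0\<^sub>v n \<Longrightarrow> x = 0\<^sub>v n"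
    and eigen: "\<And>j. j < n \<Longrightarrow> X *\<^sub>v col U j = \<mu> j \<cdot>\<^sub>v col U j"
  shows "diagonalizable n X"
proof -
  define L where "L = mat n n (\<lambda>(i, j). if i = j then \<mu> j else 0)"
  have L: "L \<in> carrier_mat n n" "diagonal_mat L"
    by (auto simp: L_def diagonal_mat_def)
  have XU: "X * U = U * L"
  proof (rule eq_matI)
    fix i j assume "i < dim_row (U * L)" "j < dim_col (U * L)"
    then have ij: "i < n" "j < n"
      using U L by auto
    have "(X * U) $$ (i, j) = (X *\<^sub>v col U j) $ i"
      using X U ij by simp
    also have "\<dots> = U $$ (i, j) * \<mu> j"
      using eigen[OF ij(2)] U ij by simp
    also have "\<dots> = (U * L) $$ (i, j)"
      using U ij by (simp add: L_def scalar_prod_def atLeast0LessThan sum_lessThan_eq_single[of j])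
    finally show "(X * U) $$ (i, j) = (U * L) $$ (i, j)" .
  qed (use X U L in auto)
  obtain V where V: "V \<in> carrier_mat n n" "U * V = 1\<^sub>m n" "V * U = 1\<^sub>m n"
    using mat_inverse_if_injective[OF U inj] by blast
  have "V * X * U = V * (U * L)"
    using V X U by (simp add: assoc_mult_mat[of V n n X n U n] XU)
  also have "\<dots> = L"
    using V U L by (simp add: assoc_mult_mat[of V n n U n L n, symmetric])
  finally show ?thesis
    unfolding diagonalizable_def using U V L by blast
qed

lemma fold_add_mat_index:
  assumes "\<And>k. f k \<in> carrier_mat n n"
  shows "fold (\<lambda>k B. B + f k) [0..<m] (0\<^sub>m n n) \<in> carrier_mat n n"
    and "i < n \<Longrightarrow> j < n \<Longrightarrow> fold (\<lambda>k B. B + f k) [0..<m] (0\<^sub>m n n) $$ (i, j) = (\<Sum>k<m. f k $$ (i, j))"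
proof -
  show carrier: "fold (\<lambda>k B. B + f k) [0..<m] (0\<^sub>m n n) \<in> carrier_mat n n" for m
    using assms by (induction m) auto
  show "i < n \<Longrightarrow> j < n \<Longrightarrow> fold (\<lambda>k B. B + f k) [0..<m] (0\<^sub>m n n) $$ (i, j) = (\<Sum>k<m. f k $$ (i, j))"
    using assms carrier by (induction m) (simp_all add: carrier_matD[OF assms])
qed

lemma poly_mat_eval_carrier [simp]:
  "A \<in> carrier_mat n n \<Longrightarrow> poly_mat_eval n p A \<in> carrier_mat n n"
  unfolding poly_mat_eval_def by (rule fold_add_mat_index) simp

lemma poly_mat_eval_dim [simp]:
  "A \<in> carrier_mat n n \<Longrightarrow> dim_row (poly_mat_eval n p A) = n"
  "A \<in> carrier_mat n n \<Longrightarrow> dim_col (poly_mat_eval n p A) = n"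
  using poly_mat_eval_carrier by blast+

lemma poly_mat_eval_index:
  assumes "A \<in> carrier_mat n n" "i < n" "j < n" "degree p < m"
  shows "poly_mat_eval n p A $$ (i, j) = (\<Sum>k<m. coeff p k * (A ^\<^sub>m k) $$ (i, j))"
proof -
  have "poly_mat_eval n p A $$ (i, j) = (\<Sum>k<Suc (degree p). coeff p k * (A ^\<^sub>m k) $$ (i, j))"
    using assms unfolding poly_mat_eval_def by (subst fold_add_mat_index(2)) auto
  also have "\<dots> = (\<Sum>k<m. coeff p k * (A ^\<^sub>m k) $$ (i, j))"
    using assms(4) by (intro sum.mono_neutral_left) (auto simp: coeff_eq_0)
  finally show ?thesis .
qed

lemma poly_mat_eval_add:
  assumes A: "A \<in> carrier_mat n n"
  shows "poly_mat_eval n (p + q) A = poly_mat_eval n p A + poly_mat_eval n q A"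
proof (rule eq_matI)
  fix i j assume "i < dim_row (poly_mat_eval n p A + poly_mat_eval n q A)"
    "j < dim_col (poly_mat_eval n p A + poly_mat_eval n q A)"
  then have ij: "i < n" "j < n"
    using A by auto
  define m where "m = Suc (degree p + degree q)"
  have "degree (p + q) < m" "degree p < m" "degree q < m"
    using degree_add_le_max[of p q] by (auto simp: m_def)
  then show "poly_mat_eval n (p + q) A $$ (i, j) = (poly_mat_eval n p A + poly_mat_eval n q A) $$ (i, j)"
    using A ij by (simp add: poly_mat_eval_index[where m = m] sum.distrib algebra_simps)
qed (use A in auto)

lemma poly_mat_eval_smult:
  assumes A: "A \<in> carrier_mat n n"
  shows "poly_mat_eval n (Polynomial.smult a p) A = a \<cdot>\<^sub>m poly_mat_eval n p A"
proof (rule eq_matI)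
  fix i j assume "i < dim_row (a \<cdot>\<^sub>m poly_mat_eval n p A)" "j < dim_col (a \<cdot>\<^sub>m poly_mat_eval n p A)"
  then have ij: "i < n" "j < n"
    using A by auto
  have "degree (Polynomial.smult a p) < Suc (degree p)"
    using degree_smult_le[of a p] by simp
  then show "poly_mat_eval n (Polynomial.smult a p) A $$ (i, j) = (a \<cdot>\<^sub>m poly_mat_eval n p A) $$ (i, j)"
    using A ij by (simp add: poly_mat_eval_index[where m = "Suc (degree p)"] sum_distrib_left distrib_left ac_simps)
qed (use A in auto)

lemma poly_mat_eval_pCons:
  assumes A: "A \<in> carrier_mat n n"
  shows "poly_mat_eval n (pCons a p) A = a \<cdot>\<^sub>m 1\<^sub>m n + A * poly_mat_eval n p A"
proof (rule eq_matI)
  fix i j assume "i < dim_row (a \<cdot>\<^sub>m 1\<^sub>m n + A * poly_mat_eval n p A)"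
    "j < dim_col (a \<cdot>\<^sub>m 1\<^sub>m n + A * poly_mat_eval n p A)"
  then have ij: "i < n" "j < n"
    using A by auto
  define m where "m = Suc (degree p)"
  have deg: "degree (pCons a p) < Suc m" "degree p < m"
    by (auto simp: m_def degree_pCons_le le_imp_less_Suc)
  have "(A * poly_mat_eval n p A) $$ (i, j) = (\<Sum>l<n. A $$ (i, l) * (\<Sum>k<m. coeff p k * (A ^\<^sub>m k) $$ (l, j)))"
    using A ij deg by (simp add: scalar_prod_def poly_mat_eval_index atLeast0LessThan)
  also have "\<dots> = (\<Sum>k<m. coeff p k * (\<Sum>l<n. A $$ (i, l) * (A ^\<^sub>m k) $$ (l, j)))"
    by (simp add: sum_distrib_left sum.swap[of _ "{..<n}"] ac_simps)
  also have "\<dots> = (\<Sum>k<m. coeff p k * (A ^\<^sub>m Suc k) $$ (i, j))"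
    using A ij by (simp add: pow_mat_Suc_left[OF A] scalar_prod_def atLeast0LessThan del: pow_mat.simps(2))
  finally have "(A * poly_mat_eval n p A) $$ (i, j) = (\<Sum>k<m. coeff p k * (A ^\<^sub>m Suc k) $$ (i, j))" .
  moreover have "poly_mat_eval n (pCons a p) A $$ (i, j)
      = a * (A ^\<^sub>m 0) $$ (i, j) + (\<Sum>k<m. coeff p k * (A ^\<^sub>m Suc k) $$ (i, j))"
    by (simp only: poly_mat_eval_index[OF A ij deg(1)] sum.lessThan_Suc_shift coeff_pCons_0 coeff_pCons_Suc)
  ultimately show "poly_mat_eval n (pCons a p) A $$ (i, j) = (a \<cdot>\<^sub>m 1\<^sub>m n + A * poly_mat_eval n p A) $$ (i, j)"
    using A ij by simp
qed (use A in auto)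

lemma poly_mat_eval_0 [simp]:
  assumes A: "A \<in> carrier_mat n n"
  shows "poly_mat_eval n 0 A = 0\<^sub>m n n"
  by (rule eq_matI) (use A in \<open>auto simp: poly_mat_eval_index[where m = 1]\<close>)

lemma poly_mat_eval_mult:
  assumes A: "A \<in> carrier_mat n n"
  shows "poly_mat_eval n (p * q) A = poly_mat_eval n p A * poly_mat_eval n q A"
proof (induction p)
  case 0
  then show ?case
    using A by simp
next
  case (pCons a p)
  let ?P = "poly_mat_eval n p A" and ?Q = "poly_mat_eval n q A"
  have carrier: "?P \<in> carrier_mat n n" "?Q \<in> carrier_mat n n"
    using A by simp_all
  have "poly_mat_eval n (pCons a p * q) A = poly_mat_eval n (Polynomial.smult a q + pCons 0 (p * q)) A"
    by simp
  also have "\<dots> = a \<cdot>\<^sub>m ?Q + A * (?P * ?Q)"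
  proof -
    have "0 \<cdot>\<^sub>m 1\<^sub>m n + A * (?P * ?Q) = A * (?P * ?Q)"
      by (rule eq_matI) (use A carrier in auto)
    then show ?thesis
      using A pCons.IH by (simp add: poly_mat_eval_add poly_mat_eval_smult poly_mat_eval_pCons)
  qed
  also have "\<dots> = (a \<cdot>\<^sub>m 1\<^sub>m n + A * ?P) * ?Q"
    using A carrier by (simp add: add_mult_distrib_mat[of _ n n _ _ n] mult_smult_assoc_mat[of _ n n _ n]
        assoc_mult_mat[of A n n ?P n ?Q n])
  also have "\<dots> = poly_mat_eval n (pCons a p) A * ?Q"
    using A by (simp add: poly_mat_eval_pCons)
  finally show ?case .
qed

lemma poly_mat_eval_x:
  assumes A: "A \<in> carrier_mat n n"
  shows "poly_mat_eval n [:0, 1:] A = A"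
  by (rule eq_matI) (use A in \<open>auto simp: poly_mat_eval_pCons\<close>)

lemma poly_mat_eval_vec_carrier [simp]:
  "A \<in> carrier_mat n n \<Longrightarrow> poly_mat_eval n p A *\<^sub>v u \<in> carrier_vec n"
  by (simp add: carrier_vecI)

lemma poly_mat_eval_zero_vec [simp]:
  "A \<in> carrier_mat n n \<Longrightarrow> poly_mat_eval n p A *\<^sub>v 0\<^sub>v n = 0\<^sub>v n"
  by (rule eq_vecI) (auto simp: scalar_prod_def)

lemma poly_mat_eval_mult_vec:
  assumes "A \<in> carrier_mat n n" "u \<in> carrier_vec n"
  shows "poly_mat_eval n (p * q) A *\<^sub>v u = poly_mat_eval n p A *\<^sub>v (poly_mat_eval n q A *\<^sub>v u)"
  using assms by (simp add: poly_mat_eval_mult assoc_mult_mat_vec[of _ n n _ n])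

lemma poly_mat_eval_add_vec:
  assumes "A \<in> carrier_mat n n" "u \<in> carrier_vec n"
  shows "poly_mat_eval n (p + q) A *\<^sub>v u = poly_mat_eval n p A *\<^sub>v u + poly_mat_eval n q A *\<^sub>v u"
  using assms by (simp add: poly_mat_eval_add add_mult_distrib_mat_vec[of _ n n])

lemma poly_mat_eval_lincomb_vec_index:
  fixes m :: nat
  assumes A: "A \<in> carrier_mat n n" and v: "v \<in> carrier_vec n" and i: "i < n"
  shows "(poly_mat_eval n (\<Sum>j<m. Polynomial.smult (x j) (b j)) A *\<^sub>v v) $ i
    = (\<Sum>j<m. x j * (poly_mat_eval n (b j) A *\<^sub>v v) $ i)"
proof (induction m)
  case (Suc m)
  then show ?case
    using A v i by (simp add: poly_mat_eval_add_vec poly_mat_eval_smult scalar_prod_def sum_distrib_left ac_simps)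
qed (use A v i in simp)

section \<open>Prime powers in polynomial rings\<close>

lemma dvd_prime_power_mult_cancel:
  fixes \<pi> g :: "'a :: idom"
  assumes \<pi>: "prime_elem \<pi>" and g: "\<not> \<pi> dvd g"
  shows "g dvd \<pi> ^ e * q \<Longrightarrow> g dvd q"
proof (induction e arbitrary: q)
  case (Suc e)
  from Suc.prems have "g dvd \<pi> ^ e * (\<pi> * q)"
    by (simp add: ac_simps)
  then have "g dvd \<pi> * q"
    by (rule Suc.IH)
  then obtain t where t: "\<pi> * q = g * t"
    by (elim dvdE)
  then have "\<pi> dvd g * t"
    by (metis dvd_triv_left)
  with \<pi> g have "\<pi> dvd t"
    by (simp add: prime_elem_dvd_mult_iff)
  then obtain t' where "t = \<pi> * t'"
    by (elim dvdE)
  with t \<pi> have "q = g * t'"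
    by (simp add: prime_elem_not_zeroI)
  then show ?case
    by simp
qed simp

lemma poly_multiplicity_decompose:
  fixes \<pi> x :: "'a :: field poly"
  assumes \<pi>: "\<not> is_unit \<pi>"
  shows "x \<noteq> 0 \<Longrightarrow> \<exists>s y. x = \<pi> ^ s * y \<and> \<not> \<pi> dvd y"
proof (induction "degree x" arbitrary: x rule: less_induct)
  case less
  show ?case
  proof (cases "\<pi> dvd x")
    case True
    then obtain y where x: "x = \<pi> * y"
      by (elim dvdE)
    with less.prems have "\<pi> \<noteq> 0" "y \<noteq> 0"
      by auto
    with \<pi> have "degree y < degree x"
      unfolding x by (simp add: degree_mult_eq is_unit_iff_degree)
    with less.hyps \<open>y \<noteq> 0\<close> obtain s z where "y = \<pi> ^ s * z" "\<not> \<pi> dvd z"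
      by blast
    then have "x = \<pi> ^ Suc s * z \<and> \<not> \<pi> dvd z"
      by (simp add: x mult.assoc)
    then show ?thesis
      by blast
  next
    case False
    then have "x = \<pi> ^ 0 * x \<and> \<not> \<pi> dvd x"
      by simp
    then show ?thesis
      by blast
  qed
qed

lemma ex_prime_power_dvd_not_dvd:
  fixes f g :: "'a :: field poly"
  shows "f \<noteq> 0 \<Longrightarrow> \<not> f dvd g \<Longrightarrow> \<exists>\<pi> e. prime_elem \<pi> \<and> \<pi> ^ e dvd f \<and> \<not> \<pi> ^ e dvd g"
proof (induction "degree f" arbitrary: f rule: less_induct)
  case less
  have "\<not> is_unit f"
    using less.prems(2) unit_imp_dvd by blast
  with less.prems(1) have "degree f > 0"
    by (simp add: is_unit_iff_degree)
  then obtain \<pi> f' where "irreducible\<^sub>d \<pi>" and f: "f = \<pi> * f'" and deg: "degree f' < degree f"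
    using irreducible\<^sub>d_factor by blast
  then have \<pi>: "prime_elem \<pi>"
    by (simp add: irreducible_connect_field field_poly_irreducible_imp_prime)
  have "f' \<noteq> 0"
    using less.prems(1) f by auto
  show ?case
  proof (cases "f' dvd g")
    case False
    with less.hyps[OF deg \<open>f' \<noteq> 0\<close>] obtain \<rho> e where "prime_elem \<rho>" "\<rho> ^ e dvd f'" "\<not> \<rho> ^ e dvd g"
      by blast
    then show ?thesis
      using f dvd_mult[of "\<rho> ^ e" f' \<pi>] by blast
  next
    case True
    txt \<open>Then \<pi> does not divide g / f', so \<pi> divides f to a higher order than g.\<close>
    then obtain h where g: "g = f' * h"
      by (elim dvdE)
    have "\<not> \<pi> dvd h"
    proof
      assume "\<pi> dvd h"
      then have "\<pi> * f' dvd h * f'"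
        by (simp add: mult_dvd_mono)
      with less.prems(2) show False
        by (simp add: f g mult.commute)
    qed
    obtain t y where f': "f' = \<pi> ^ t * y" and y: "\<not> \<pi> dvd y"
      using poly_multiplicity_decompose[OF prime_elem_not_unit[OF \<pi>] \<open>f' \<noteq> 0\<close>] by blast
    have "\<pi> ^ Suc t dvd f"
      unfolding f f' by (simp add: mult.assoc)
    moreover have "\<not> \<pi> ^ Suc t dvd g"
    proof
      assume "\<pi> ^ Suc t dvd g"
      then have "\<pi> ^ t * \<pi> dvd \<pi> ^ t * (y * h)"
        unfolding g f' by (simp add: ac_simps)
      then have "\<pi> dvd y * h"
        using \<pi> by (simp add: prime_elem_not_zeroI)
      with \<pi> y \<open>\<not> \<pi> dvd h\<close> show False
        by (simp add: prime_elem_dvd_mult_iff)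
    qed
    ultimately show ?thesis
      using \<pi> by blast
  qed
qed

lemma not_dvd_exact_prime_power:
  fixes f g :: "'a :: field poly"
  assumes "f \<noteq> 0" "g \<noteq> 0" "\<not> f dvd g"
  obtains \<pi> s g' where "prime_elem \<pi>" "\<pi> ^ Suc s dvd f" "g = \<pi> ^ s * g'" "\<not> \<pi> dvd g'"
proof -
  obtain \<pi> e where \<pi>: "prime_elem \<pi>" and f: "\<pi> ^ e dvd f" and g: "\<not> \<pi> ^ e dvd g"
    using ex_prime_power_dvd_not_dvd assms(1,3) by blast
  obtain s g' where g': "g = \<pi> ^ s * g'" "\<not> \<pi> dvd g'"
    using poly_multiplicity_decompose[OF prime_elem_not_unit[OF \<pi>] assms(2)] by blast
  have "s < e"
  proof (rule ccontr)
    assume "\<not> s < e"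
    then have "\<pi> ^ e dvd \<pi> ^ s * g'"
      by (simp add: le_imp_power_dvd)
    with g g' show False
      by simp
  qed
  then have "\<pi> ^ Suc s dvd f"
    using f le_imp_power_dvd[of "Suc s" e \<pi>] dvd_trans by auto
  with \<pi> g' that show ?thesis
    by blast
qed

section \<open>Annihilators and cyclic vectors\<close>

definition annihilator_generator :: "nat \<Rightarrow> 'a :: field mat \<Rightarrow> 'a vec \<Rightarrow> 'a poly \<Rightarrow> bool" where
  "annihilator_generator n A u g \<longleftrightarrow> (\<forall>q. poly_mat_eval n q A *\<^sub>v u = 0\<^sub>v n \<longleftrightarrow> g dvd q)"

lemma annihilator_generator_exists:
  assumes A: "A \<in> carrier_mat n n" and u: "u \<in> carrier_vec n"
    and p: "p \<noteq> 0" "poly_mat_eval n p A = 0\<^sub>m n n"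
  obtains g where "g \<noteq> 0" "annihilator_generator n A u g"
proof -
  let ?kills = "\<lambda>q. q \<noteq> 0 \<and> poly_mat_eval n q A *\<^sub>v u = 0\<^sub>v n"
  have "?kills p"
    using p u by simp
  then obtain g where g: "?kills g" and min: "\<And>q. ?kills q \<Longrightarrow> degree g \<le> degree q"
    using ex_has_least_nat[of ?kills p degree] by blast
  have "annihilator_generator n A u g"
    unfolding annihilator_generator_def
  proof (intro allI iffI)
    fix q assume q: "poly_mat_eval n q A *\<^sub>v u = 0\<^sub>v n"
    have "poly_mat_eval n (q div g * g + q mod g) A *\<^sub>v u
        = poly_mat_eval n (q div g * g) A *\<^sub>v u + poly_mat_eval n (q mod g) A *\<^sub>v u"
      by (rule poly_mat_eval_add_vec[OF A u])
    also have "poly_mat_eval n (q div g * g) A *\<^sub>v u = 0\<^sub>v n"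
      using A u g by (simp add: poly_mat_eval_mult_vec)
    finally have "poly_mat_eval n (q mod g) A *\<^sub>v u = 0\<^sub>v n"
      using A q by simp
    then have "q mod g = 0"
      using min[of "q mod g"] degree_mod_less'[of g q] g by force
    then show "g dvd q"
      by (simp add: mod_eq_0_iff_dvd)
  next
    fix q assume "g dvd q"
    then obtain r where "q = r * g"
      by (metis dvd_def mult.commute)
    then show "poly_mat_eval n q A *\<^sub>v u = 0\<^sub>v n"
      using A u g by (simp add: poly_mat_eval_mult_vec)
  qed
  with g that show ?thesis
    by blast
qed

lemma annihilator_generator_factor:
  assumes A: "A \<in> carrier_mat n n" and u: "u \<in> carrier_vec n"
    and g: "annihilator_generator n A u (h * h')" "h * h' \<noteq> 0"
  shows "annihilator_generator n A (poly_mat_eval n h' A *\<^sub>v u) h"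
  unfolding annihilator_generator_def
proof
  fix q
  have "h' \<noteq> 0"
    using g(2) by auto
  then have "h * h' dvd q * h' \<longleftrightarrow> h dvd q"
    by (simp add: mult.commute)
  then show "poly_mat_eval n q A *\<^sub>v (poly_mat_eval n h' A *\<^sub>v u) = 0\<^sub>v n \<longleftrightarrow> h dvd q"
    using g(1) A u by (simp add: annihilator_generator_def poly_mat_eval_mult_vec[symmetric])
qed

lemma annihilator_generator_add:
  assumes A: "A \<in> carrier_mat n n" and u: "u \<in> carrier_vec n" and w: "w \<in> carrier_vec n"
    and f: "annihilator_generator n A u f" and g: "annihilator_generator n A w g"
    and coprime_f: "\<And>q. f dvd g * q \<Longrightarrow> f dvd q" and coprime_g: "\<And>q. g dvd f * q \<Longrightarrow> g dvd q"
  shows "annihilator_generator n A (u + w) (f * g)"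
  unfolding annihilator_generator_def
proof (intro allI iffI)
  fix q assume "poly_mat_eval n q A *\<^sub>v (u + w) = 0\<^sub>v n"
  then have sum: "poly_mat_eval n q A *\<^sub>v u + poly_mat_eval n q A *\<^sub>v w = 0\<^sub>v n"
    using A u w by (simp add: mult_add_distrib_mat_vec[of _ n n])
  have carrier: "poly_mat_eval n q A *\<^sub>v u \<in> carrier_vec n" "poly_mat_eval n q A *\<^sub>v w \<in> carrier_vec n"
    using A by simp_all
  have opposite: "poly_mat_eval n q A *\<^sub>v u = - (poly_mat_eval n q A *\<^sub>v w)"
    using carrier sum by (rule add_eq_0_vec_imp_eq_uminus)
  have opposite': "poly_mat_eval n q A *\<^sub>v w = - (poly_mat_eval n q A *\<^sub>v u)"
    using carrier(2,1) sum[unfolded comm_add_vec[OF carrier]] by (rule add_eq_0_vec_imp_eq_uminus)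
  have "poly_mat_eval n (g * q) A *\<^sub>v u = - (poly_mat_eval n (g * q) A *\<^sub>v w)"
    using A u w by (simp add: poly_mat_eval_mult_vec opposite mult_mat_vec_uminus[of _ n n])
  also have "\<dots> = 0\<^sub>v n"
    using g A by (simp add: annihilator_generator_def uminus_zero_vec_eq)
  finally have "f dvd g * q"
    using f by (simp add: annihilator_generator_def)
  then have "f dvd q"
    by (rule coprime_f)
  then obtain t where q: "q = f * t"
    by (elim dvdE)
  have "poly_mat_eval n (f * q) A *\<^sub>v w = - (poly_mat_eval n (f * q) A *\<^sub>v u)"
    using A u w by (simp add: poly_mat_eval_mult_vec opposite' mult_mat_vec_uminus[of _ n n])
  also have "\<dots> = 0\<^sub>v n"
    using f A by (simp add: annihilator_generator_def uminus_zero_vec_eq)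
  finally have "g dvd f * q"
    using g by (simp add: annihilator_generator_def)
  then have "g dvd f * t"
    unfolding q by (rule coprime_g)
  then have "g dvd t"
    by (rule coprime_g)
  then show "f * g dvd q"
    by (simp add: q)
next
  fix q assume "f * g dvd q"
  then have "f dvd q" "g dvd q"
    by (auto intro: dvd_mult_left dvd_mult_right)
  then have "poly_mat_eval n q A *\<^sub>v u = 0\<^sub>v n" "poly_mat_eval n q A *\<^sub>v w = 0\<^sub>v n"
    using f g by (simp_all add: annihilator_generator_def)
  then show "poly_mat_eval n q A *\<^sub>v (u + w) = 0\<^sub>v n"
    using A u w by (simp add: mult_add_distrib_mat_vec[of _ n n])
qed

lemma annihilator_generator_dvd_max_degree:
  assumes A: "A \<in> carrier_mat n n" and v: "v \<in> carrier_vec n"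
    and g: "annihilator_generator n A v g" "g \<noteq> 0"
    and max: "\<And>w h. w \<in> carrier_vec n \<Longrightarrow> h \<noteq> 0 \<Longrightarrow> annihilator_generator n A w h \<Longrightarrow> degree h \<le> degree g"
    and u: "u \<in> carrier_vec n" and f: "annihilator_generator n A u f" "f \<noteq> 0"
  shows "f dvd g"
proof (rule ccontr)
  txt \<open>Otherwise some prime power divides f to a higher order than g, and a vector annihilated
    exactly by that prime power plus one annihilated exactly by the prime-free part of g has an
    annihilator of larger degree than g.\<close>
  assume "\<not> f dvd g"
  then obtain \<pi> s g' where \<pi>: "prime_elem \<pi>" and "\<pi> ^ Suc s dvd f"
    and g': "g = \<pi> ^ s * g'" "\<not> \<pi> dvd g'"
    by (rule not_dvd_exact_prime_power[OF f(2) g(2)])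
  then obtain f' where f': "f = \<pi> ^ Suc s * f'"
    by (elim dvdE)
  have "\<pi> \<noteq> 0" "g' \<noteq> 0"
    using \<pi> g g'(1) by (auto simp: prime_elem_not_zeroI)
  define u' where "u' = poly_mat_eval n f' A *\<^sub>v u"
  define v' where "v' = poly_mat_eval n (\<pi> ^ s) A *\<^sub>v v"
  have carrier: "u' \<in> carrier_vec n" "v' \<in> carrier_vec n" "u' + v' \<in> carrier_vec n"
    using A by (simp_all add: u'_def v'_def)
  have "annihilator_generator n A u' (\<pi> ^ Suc s)"
    unfolding u'_def using annihilator_generator_factor[OF A u] f f' by simp
  moreover have "annihilator_generator n A v' g'"
    unfolding v'_def using annihilator_generator_factor[OF A v, of g' "\<pi> ^ s"] g g'
    by (simp add: mult.commute)
  ultimately have "annihilator_generator n A (u' + v') (\<pi> ^ Suc s * g')"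
  proof (rule annihilator_generator_add[OF A carrier(1,2)])
    show "\<pi> ^ Suc s dvd q" if "\<pi> ^ Suc s dvd g' * q" for q
      using prime_power_dvd_multD[OF \<pi> that _ g'(2)] by simp
    show "g' dvd q" if "g' dvd \<pi> ^ Suc s * q" for q
      using dvd_prime_power_mult_cancel[OF \<pi> g'(2) that] .
  qed
  then have "degree (\<pi> ^ Suc s * g') \<le> degree (\<pi> ^ s * g')"
    using max[OF carrier(3)] \<open>\<pi> \<noteq> 0\<close> \<open>g' \<noteq> 0\<close> g'(1) by simp
  moreover have "degree \<pi> > 0"
    using prime_elem_not_unit[OF \<pi>] \<open>\<pi> \<noteq> 0\<close> by (simp add: is_unit_iff_degree)
  ultimately show False
    using \<open>\<pi> \<noteq> 0\<close> \<open>g' \<noteq> 0\<close> by (simp add: degree_mult_eq degree_power_eq)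
qed

text \<open>The vectors v, A v, ..., A^(n-1) v are linearly independent.\<close>
definition cyclic_vec :: "nat \<Rightarrow> 'a :: field mat \<Rightarrow> 'a vec \<Rightarrow> bool" where
  "cyclic_vec n A v \<longleftrightarrow> (\<forall>q. q \<noteq> 0 \<longrightarrow> degree q < n \<longrightarrow> poly_mat_eval n q A *\<^sub>v v \<noteq> 0\<^sub>v n)"

lemma annihilator_generator_max_degree_exists:
  assumes A: "A \<in> carrier_mat n n" and p: "p \<noteq> 0" "poly_mat_eval n p A = 0\<^sub>m n n"
  obtains v g where "v \<in> carrier_vec n" "annihilator_generator n A v g" "g \<noteq> 0"
    "\<And>w h. w \<in> carrier_vec n \<Longrightarrow> h \<noteq> 0 \<Longrightarrow> annihilator_generator n A w h \<Longrightarrow> degree h \<le> degree g"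
proof -
  let ?gen = "\<lambda>w h. w \<in> carrier_vec n \<and> h \<noteq> 0 \<and> annihilator_generator n A w h"
  define degs where "degs = {degree h | w h. ?gen w h}"
  have bounded: "degree h \<le> degree p" if "?gen w h" for w h
  proof -
    have "poly_mat_eval n p A *\<^sub>v w = 0\<^sub>v n"
      using p that by simp
    then have "h dvd p"
      using that unfolding annihilator_generator_def by blast
    then show ?thesis
      using p(1) by (rule dvd_imp_degree_le)
  qed
  have "degs \<subseteq> {..degree p}"
  proof
    fix d assume "d \<in> degs"
    then obtain w h where "?gen w h" "d = degree h"
      unfolding degs_def by blast
    then show "d \<in> {..degree p}"
      using bounded by simp
  qed
  then have "finite degs"
    by (rule finite_subset) simp
  obtain g0 where "g0 \<noteq> 0" "annihilator_generator n A (0\<^sub>v n) g0"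
    by (rule annihilator_generator_exists[OF A zero_carrier_vec p])
  then have "degs \<noteq> {}"
    unfolding degs_def using zero_carrier_vec by blast
  with \<open>finite degs\<close> have "Max degs \<in> degs"
    by (rule Max_in)
  then obtain v g where "?gen v g" and g_max: "Max degs = degree g"
    unfolding degs_def by blast
  moreover have "degree h \<le> degree g" if "?gen w h" for w h
    unfolding g_max[symmetric] using \<open>finite degs\<close> that by (intro Max_ge) (auto simp: degs_def)
  ultimately show ?thesis
    using that by blast
qed

lemma cyclic_vec_exists:
  assumes A: "A \<in> carrier_mat n n" and p: "p \<noteq> 0" "poly_mat_eval n p A = 0\<^sub>m n n"
    and min: "\<And>q. q \<noteq> 0 \<Longrightarrow> poly_mat_eval n q A = 0\<^sub>m n n \<Longrightarrow> n \<le> degree q"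
  obtains v where "v \<in> carrier_vec n" "cyclic_vec n A v"
proof -
  obtain v g where v: "v \<in> carrier_vec n" and g: "annihilator_generator n A v g" "g \<noteq> 0"
    and max: "\<And>w h. w \<in> carrier_vec n \<Longrightarrow> h \<noteq> 0 \<Longrightarrow> annihilator_generator n A w h \<Longrightarrow> degree h \<le> degree g"
    by (rule annihilator_generator_max_degree_exists[OF A p]) blast
  have "poly_mat_eval n g A *\<^sub>v u = 0\<^sub>v n" if u: "u \<in> carrier_vec n" for u
  proof -
    obtain f where f: "f \<noteq> 0" "annihilator_generator n A u f"
      by (rule annihilator_generator_exists[OF A u p])
    have "f dvd g"
      using A v g max u f(2,1) by (rule annihilator_generator_dvd_max_degree)
    then show ?thesis
      using f(2) by (simp add: annihilator_generator_def)
  qed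
  then have "poly_mat_eval n g A = 0\<^sub>m n n"
    using A by (intro mat_eq_0_if_mult_vec_eq_0) simp_all
  then have "n \<le> degree g"
    using min g(2) by blast
  have "cyclic_vec n A v"
    unfolding cyclic_vec_def
  proof (intro allI impI notI)
    fix q assume "q \<noteq> 0" "degree q < n" "poly_mat_eval n q A *\<^sub>v v = 0\<^sub>v n"
    then have "g dvd q"
      using g(1) by (simp add: annihilator_generator_def)
    then have "degree g \<le> degree q"
      using \<open>q \<noteq> 0\<close> by (rule dvd_imp_degree_le)
    with \<open>n \<le> degree g\<close> \<open>degree q < n\<close> show False
      by simp
  qed
  with v that show ?thesis
    by blast
qed

section \<open>Newton bases and companion matrices\<close>

definition newton_poly :: "(nat \<Rightarrow> 'a :: comm_ring_1) \<Rightarrow> nat \<Rightarrow> 'a poly" where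
  "newton_poly c i = (\<Prod>l<i. [:- c l, 1:])"

lemma newton_poly_Suc: "newton_poly c (Suc i) = newton_poly c i * [:- c i, 1:]"
  by (simp add: newton_poly_def)

lemma monic_newton_poly: "monic (newton_poly (c :: nat \<Rightarrow> 'a :: idom) i)"
  by (simp add: newton_poly_def lead_coeff_prod)

lemma degree_newton_poly [simp]: "degree (newton_poly (c :: nat \<Rightarrow> 'a :: idom) i) = i"
  by (simp add: newton_poly_def degree_prod_sum_eq)

lemma x_mult_newton_poly:
  "[:0, 1:] * newton_poly c i = newton_poly c (Suc i) + Polynomial.smult (c i) (newton_poly c i)"
proof -
  have "[:0, 1:] * newton_poly c i = ([:- c i, 1:] + [:c i:]) * newton_poly c i"
    by simp
  then show ?thesis
    by (simp add: newton_poly_Suc distrib_right mult.commute)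
qed

lemma monic_basis_expansion:
  fixes b :: "nat \<Rightarrow> 'a :: field poly"
  assumes deg: "\<And>i. degree (b i) = i" and monic: "\<And>i. monic (b i)"
  shows "q = 0 \<or> degree q < m \<Longrightarrow> \<exists>r. q = (\<Sum>i<m. Polynomial.smult (r i) (b i))"
proof (induction m arbitrary: q)
  case 0
  then show ?case
    by auto
next
  case (Suc m)
  define q' where "q' = q - Polynomial.smult (coeff q m) (b m)"
  have "degree q' \<le> m"
    unfolding q'_def using Suc.prems deg[of m] by (auto intro!: degree_diff_le degree_smult_le[THEN order_trans])
  moreover have "coeff q' m = 0"
    using monic[of m] deg[of m] by (simp add: q'_def)
  ultimately have "q' = 0 \<or> degree q' < m"
    by (metis leading_coeff_0_iff le_neq_implies_less)
  then obtain r where r: "q' = (\<Sum>i<m. Polynomial.smult (r i) (b i))"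
    using Suc.IH by blast
  have "q = (\<Sum>i<Suc m. Polynomial.smult ((r(m := coeff q m)) i) (b i))"
    using r by (simp add: q'_def algebra_simps)
  then show ?case
    by blast
qed

lemma monic_basis_degree_lincomb:
  fixes b :: "nat \<Rightarrow> 'a :: field poly"
  assumes deg: "\<And>i. degree (b i) = i" and "m > 0"
  shows "degree (\<Sum>i<m. Polynomial.smult (r i) (b i)) < m"
proof -
  have "degree (\<Sum>i<m. Polynomial.smult (r i) (b i)) \<le> m - 1"
    by (intro degree_sum_le) (use deg degree_smult_le order_trans in \<open>fastforce+\<close>)
  with \<open>m > 0\<close> show ?thesis
    by linarith
qed

lemma monic_basis_lincomb_eq_0:
  fixes b :: "nat \<Rightarrow> 'a :: field poly"
  assumes deg: "\<And>i. degree (b i) = i" and monic: "\<And>i. monic (b i)"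
  shows "(\<Sum>i<m. Polynomial.smult (r i) (b i)) = 0 \<Longrightarrow> i < m \<Longrightarrow> r i = 0"
proof (induction m)
  case (Suc m)
  have "coeff (\<Sum>i<Suc m. Polynomial.smult (r i) (b i)) m = r m"
    using deg monic by (simp add: coeff_sum coeff_eq_0)
  with Suc.prems(1) have "r m = 0"
    by simp
  with Suc show ?case
    by (cases "i = m") simp_all
qed simp

lemma monic_newton_expansion:
  fixes p :: "'a :: field poly"
  assumes "monic p" "degree p = n"
  obtains r where "p = newton_poly c n + (\<Sum>i<n. Polynomial.smult (r i) (newton_poly c i))"
proof -
  let ?q = "p - newton_poly c n"
  have "degree ?q \<le> n"
    using assms(2) by (intro degree_diff_le) simp_all
  moreover have "coeff ?q n = 0"
    using assms monic_newton_poly[of c n] by simp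
  ultimately have "?q = 0 \<or> degree ?q < n"
    by (metis leading_coeff_0_iff le_neq_implies_less)
  then obtain r where "?q = (\<Sum>i<n. Polynomial.smult (r i) (newton_poly c i))"
    using monic_basis_expansion[of "newton_poly c", OF degree_newton_poly monic_newton_poly] by blast
  then have "p = newton_poly c n + (\<Sum>i<n. Polynomial.smult (r i) (newton_poly c i))"
    by (simp add: diff_eq_eq)
  then show ?thesis
    by (rule that)
qed

definition krylov_mat :: "nat \<Rightarrow> 'a :: comm_ring_1 mat \<Rightarrow> 'a vec \<Rightarrow> (nat \<Rightarrow> 'a poly) \<Rightarrow> 'a mat" where
  "krylov_mat n A v b = mat n n (\<lambda>(i, j). (poly_mat_eval n (b j) A *\<^sub>v v) $ i)"

lemma krylov_mat_carrier [simp]: "krylov_mat n A v b \<in> carrier_mat n n"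
  and krylov_mat_dim [simp]: "dim_row (krylov_mat n A v b) = n" "dim_col (krylov_mat n A v b) = n"
  by (simp_all add: krylov_mat_def)

lemma col_krylov_mat:
  "A \<in> carrier_mat n n \<Longrightarrow> j < n \<Longrightarrow> col (krylov_mat n A v b) j = poly_mat_eval n (b j) A *\<^sub>v v"
  by (rule eq_vecI) (simp_all add: krylov_mat_def)

lemma krylov_mat_mult_vec:
  assumes A: "A \<in> carrier_mat n n" and v: "v \<in> carrier_vec n" and x: "x \<in> carrier_vec n"
  shows "krylov_mat n A v b *\<^sub>v x = poly_mat_eval n (\<Sum>j<n. Polynomial.smult (x $ j) (b j)) A *\<^sub>v v"
proof (rule eq_vecI)
  fix i assume "i < dim_vec (poly_mat_eval n (\<Sum>j<n. Polynomial.smult (x $ j) (b j)) A *\<^sub>v v)"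
  then have i: "i < n"
    using A by simp
  then show "(krylov_mat n A v b *\<^sub>v x) $ i = (poly_mat_eval n (\<Sum>j<n. Polynomial.smult (x $ j) (b j)) A *\<^sub>v v) $ i"
    using x by (simp add: poly_mat_eval_lincomb_vec_index[OF A v i] krylov_mat_def scalar_prod_def
        atLeast0LessThan mult.commute)
qed (use A in simp)

lemma krylov_mat_injective:
  fixes A :: "'a :: field mat"
  assumes A: "A \<in> carrier_mat n n" and v: "v \<in> carrier_vec n" and "n > 0" and cyclic: "cyclic_vec n A v"
    and deg: "\<And>i. degree (b i) = i" and monic: "\<And>i. monic (b i)"
    and x: "x \<in> carrier_vec n" and zero: "krylov_mat n A v b *\<^sub>v x = 0\<^sub>v n"
  shows "x = 0\<^sub>v n"
proof -
  let ?q = "\<Sum>j<n. Polynomial.smult (x $ j) (b j)"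
  have "degree ?q < n"
    using deg \<open>n > 0\<close> by (rule monic_basis_degree_lincomb)
  moreover have "poly_mat_eval n ?q A *\<^sub>v v = 0\<^sub>v n"
    using zero krylov_mat_mult_vec[OF A v x] by simp
  ultimately have "?q = 0"
    using cyclic by (auto simp: cyclic_vec_def)
  then show ?thesis
    using x monic_basis_lincomb_eq_0[OF deg monic] by (intro eq_vecI) auto
qed

definition newton_companion_mat :: "nat \<Rightarrow> (nat \<Rightarrow> 'a :: comm_ring_1) \<Rightarrow> (nat \<Rightarrow> 'a) \<Rightarrow> 'a mat" where
  "newton_companion_mat n c r = mat n n (\<lambda>(i, j).
     (if i = j then c j else 0) + (if i = Suc j then 1 else 0) - (if j = n - 1 then r i else 0))"

lemma newton_companion_mat_carrier [simp]: "newton_companion_mat n c r \<in> carrier_mat n n"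
  and newton_companion_mat_dim [simp]:
    "dim_row (newton_companion_mat n c r) = n" "dim_col (newton_companion_mat n c r) = n"
  by (simp_all add: newton_companion_mat_def)

lemma x_mult_newton_poly_companion:
  fixes c r :: "nat \<Rightarrow> 'a :: idom"
  assumes j: "j < n" and p: "p = newton_poly c n + (\<Sum>i<n. Polynomial.smult (r i) (newton_poly c i))"
  shows "[:0, 1:] * newton_poly c j
    = (\<Sum>i<n. Polynomial.smult (newton_companion_mat n c r $$ (i, j)) (newton_poly c i))
      + (if j = n - 1 then p else 0)"
proof -
  have "(\<Sum>i<n. Polynomial.smult (newton_companion_mat n c r $$ (i, j)) (newton_poly c i))
      = Polynomial.smult (c j) (newton_poly c j)
        + (\<Sum>i<n. if i = Suc j then newton_poly c i else 0)
        - (if j = n - 1 then \<Sum>i<n. Polynomial.smult (r i) (newton_poly c i) else 0)"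
    using j by (simp add: newton_companion_mat_def smult_add_left smult_diff_left sum.distrib
        sum_subtractf if_distrib[of "\<lambda>a. Polynomial.smult a _"] cong: if_cong)
  also have "(\<Sum>i<n. if i = Suc j then newton_poly c i else 0)
      = (if j = n - 1 then 0 else newton_poly c (Suc j))"
    using j by (simp, linarith)
  moreover have "Suc (n - 1) = n"
    using j by simp
  ultimately show ?thesis
    unfolding x_mult_newton_poly using p by (cases "j = n - 1") (simp_all add: algebra_simps)
qed

lemma krylov_mat_newton_companion:
  fixes A :: "'a :: field mat"
  assumes A: "A \<in> carrier_mat n n" and v: "v \<in> carrier_vec n" and pA: "poly_mat_eval n p A = 0\<^sub>m n n"
    and p: "p = newton_poly c n + (\<Sum>i<n. Polynomial.smult (r i) (newton_poly c i))"
  shows "A * krylov_mat n A v (newton_poly c) = krylov_mat n A v (newton_poly c) * newton_companion_mat n c r"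
    (is "A * ?K = ?K * ?T")
proof (rule eq_matI)
  fix i j assume "i < dim_row (?K * ?T)" "j < dim_col (?K * ?T)"
  then have i: "i < n" and j: "j < n"
    by simp_all
  have "(A * ?K) $$ (i, j) = (A *\<^sub>v (poly_mat_eval n (newton_poly c j) A *\<^sub>v v)) $ i"
    using A i j by (simp add: col_krylov_mat)
  also have "\<dots> = (poly_mat_eval n ([:0, 1:] * newton_poly c j) A *\<^sub>v v) $ i"
    by (simp only: poly_mat_eval_mult_vec[OF A v] poly_mat_eval_x[OF A])
  also have "\<dots> = (poly_mat_eval n (\<Sum>l<n. Polynomial.smult (?T $$ (l, j)) (newton_poly c l)) A *\<^sub>v v) $ i"
    unfolding x_mult_newton_poly_companion[OF j p] using A v pA by (simp add: poly_mat_eval_add_vec)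
  also have "\<dots> = (?K *\<^sub>v col ?T j) $ i"
    using A v j by (simp add: krylov_mat_mult_vec)
  also have "\<dots> = (?K * ?T) $$ (i, j)"
    using i j by simp
  finally show "(A * ?K) $$ (i, j) = (?K * ?T) $$ (i, j)" .
qed (use A in auto)

lemma mat_trace_newton_companion:
  "n > 0 \<Longrightarrow> mat_trace (newton_companion_mat n c r) = (\<Sum>i<n. c i) - r (n - 1)"
  by (simp add: mat_trace_def newton_companion_mat_def sum_subtractf)

lemma similar_newton_companion:
  fixes A :: "'a :: field mat"
  assumes A: "A \<in> carrier_mat n n" and "n > 0" and p: "p \<noteq> 0" "poly_mat_eval n p A = 0\<^sub>m n n"
    and min: "\<And>q. q \<noteq> 0 \<Longrightarrow> poly_mat_eval n q A = 0\<^sub>m n n \<Longrightarrow> n \<le> degree q"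
    and p_expansion: "p = newton_poly c n + (\<Sum>i<n. Polynomial.smult (r i) (newton_poly c i))"
  shows "similar_mat A (newton_companion_mat n c r)"
proof -
  obtain v where v: "v \<in> carrier_vec n" and cyclic: "cyclic_vec n A v"
    using cyclic_vec_exists[OF A p min] by blast
  let ?K = "krylov_mat n A v (newton_poly c)" and ?T = "newton_companion_mat n c r"
  obtain Q where Q: "Q \<in> carrier_mat n n" "?K * Q = 1\<^sub>m n" "Q * ?K = 1\<^sub>m n"
    using krylov_mat_injective[OF A v \<open>n > 0\<close> cyclic degree_newton_poly monic_newton_poly]
    by (rule mat_inverse_if_injective[OF krylov_mat_carrier]) blast+
  have "A = A * (?K * Q)"
    using A Q by simp
  also have "\<dots> = A * ?K * Q"
    using A Q by (simp add: assoc_mult_mat[of A n n ?K n Q n])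
  also have "\<dots> = ?K * ?T * Q"
    by (simp add: krylov_mat_newton_companion[OF A v p(2) p_expansion])
  finally show ?thesis
    using A Q by (intro similar_matI[of A ?T ?K Q n]) auto
qed

lemma non_derogatory_similar_newton_companion:
  fixes A :: "'a :: field mat"
  assumes A: "A \<in> carrier_mat n n" and "n > 0" and "non_derogatory n A"
  obtains r where "similar_mat A (newton_companion_mat n c r)"
proof -
  let ?p = "char_poly A"
  have min_poly: "monic ?p" "poly_mat_eval n ?p A = 0\<^sub>m n n"
      "\<And>q. q \<noteq> 0 \<Longrightarrow> poly_mat_eval n q A = 0\<^sub>m n n \<Longrightarrow> degree ?p \<le> degree q"
    using assms(3) by (auto simp: non_derogatory_def is_minimal_poly_def)
  have "degree ?p = n"
    using degree_monic_char_poly[OF A] by simp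
  then obtain r where "?p = newton_poly c n + (\<Sum>i<n. Polynomial.smult (r i) (newton_poly c i))"
    by (rule monic_newton_expansion[OF min_poly(1)])
  moreover have "?p \<noteq> 0"
    using min_poly(1) by auto
  moreover have "n \<le> degree q" if "q \<noteq> 0" "poly_mat_eval n q A = 0\<^sub>m n n" for q
    using min_poly(3)[OF that] \<open>degree ?p = n\<close> by simp
  ultimately have "similar_mat A (newton_companion_mat n c r)"
    using A \<open>n > 0\<close> min_poly(2) by (intro similar_newton_companion[of A n "?p"])
  then show ?thesis
    by (rule that)
qed

section \<open>A square-zero correction of the companion matrix\<close>

definition square_zero_correction :: "nat \<Rightarrow> (nat \<Rightarrow> 'a :: comm_ring_1) \<Rightarrow> 'a mat" where
  "square_zero_correction n r = mat n n (\<lambda>(i, j).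
     (if j = n - 1 \<and> even i then r i else 0) - (if i = Suc j \<and> odd j then 1 else 0))"

definition corrected_companion_mat :: "nat \<Rightarrow> (nat \<Rightarrow> 'a :: comm_ring_1) \<Rightarrow> (nat \<Rightarrow> 'a) \<Rightarrow> 'a mat" where
  "corrected_companion_mat n c r = mat n n (\<lambda>(i, j).
     (if i = j then c j else 0) + (if i = Suc j \<and> even j then 1 else 0) - (if j = n - 1 \<and> odd i then r i else 0))"

lemma square_zero_correction_carrier [simp]: "square_zero_correction n r \<in> carrier_mat n n"
  by (simp add: square_zero_correction_def)

lemma corrected_companion_mat_carrier [simp]: "corrected_companion_mat n c r \<in> carrier_mat n n"
  and corrected_companion_mat_dim [simp]:
    "dim_row (corrected_companion_mat n c r) = n" "dim_col (corrected_companion_mat n c r) = n"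
  by (simp_all add: corrected_companion_mat_def)

lemma newton_companion_plus_correction:
  "newton_companion_mat n c r + square_zero_correction n r = corrected_companion_mat n c r"
  by (rule eq_matI)
    (auto simp: newton_companion_mat_def square_zero_correction_def corrected_companion_mat_def)

lemma square_zero_correction_square:
  assumes "even n"
  shows "square_zero_correction n r * square_zero_correction n r = 0\<^sub>m n n"
proof (rule mat_mult_self_eq_0_if_support[where S = even])
  fix i j assume "i < n" "j < n" "square_zero_correction n r $$ (i, j) \<noteq> 0"
  then show "even i \<and> \<not> even j"
    using assms by (auto simp: square_zero_correction_def split: if_splits)
qed simp

lemma corrected_companion_mult_vec_index:
  assumes x: "x \<in> carrier_vec n" and i: "i < n"
  shows "(corrected_companion_mat n c r *\<^sub>v x) $ i
    = c i * x $ i + (if odd i then x $ (i - 1) - r i * x $ (n - 1) else 0)"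
proof -
  have "(corrected_companion_mat n c r *\<^sub>v x) $ i
      = (\<Sum>j<n. (if i = j then c j else 0) * x $ j)
        + (\<Sum>j<n. (if i = Suc j \<and> even j then 1 else 0) * x $ j)
        - (\<Sum>j<n. (if j = n - 1 \<and> odd i then r i else 0) * x $ j)"
    using x i by (simp add: corrected_companion_mat_def scalar_prod_def atLeast0LessThan
        sum.distrib sum_subtractf algebra_simps)
  also have "(\<Sum>j<n. (if i = j then c j else 0) * x $ j) = c i * x $ i"
    using i by (subst sum_lessThan_eq_single[of i]) auto
  also have "(\<Sum>j<n. (if i = Suc j \<and> even j then 1 else 0) * x $ j) = (if odd i then x $ (i - 1) else 0)"
  proof (cases "odd i")
    case True
    then have "i = Suc (i - 1)" "even (i - 1)"
      by presburger+
    then show ?thesis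
      using i True by (subst sum_lessThan_eq_single[of "i - 1"]) auto
  qed (auto intro!: sum.neutral)
  also have "(\<Sum>j<n. (if j = n - 1 \<and> odd i then r i else 0) * x $ j) = (if odd i then r i * x $ (n - 1) else 0)"
    using i by (subst sum_lessThan_eq_single[of "n - 1"]) auto
  finally show ?thesis
    by simp
qed

text \<open>Column j is an eigenvector of corrected_companion_mat n c r when all odd nodes are eps; the
  eigenvalue is c j, except for the last column, where it is eps - r (n - 1). The odd entries of the
  columns n - 2 and n - 1 compensate for the last column of the matrix.\<close>
definition companion_eigvec_entry :: "nat \<Rightarrow> (nat \<Rightarrow> 'a :: field) \<Rightarrow> (nat \<Rightarrow> 'a) \<Rightarrow> 'a \<Rightarrow> nat \<Rightarrow> nat \<Rightarrow> 'a"
  where "companion_eigvec_entry n c r \<epsilon> i j =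
    (let \<gamma> = 1 / (c (n - 2) - (\<epsilon> - r (n - 1))) in
     if even i then (if i = j then 1 else 0)
     else if j = n - 1 then (if i = n - 1 then 1 else r i / r (n - 1))
     else if j = n - 2 then (if i = n - 1 then \<gamma> else - r i * \<gamma> / (c (n - 2) - \<epsilon>))
     else if even j then (if i = Suc j then 1 / (c j - \<epsilon>) else 0)
     else if i = j then 1 else 0)"

lemma companion_eigvec_entry_even_row:
  "even i \<Longrightarrow> companion_eigvec_entry n c r \<epsilon> i j = (if i = j then 1 else 0)"
  by (simp add: companion_eigvec_entry_def)

lemma companion_eigvec_entry_odd_col:
  "even n \<Longrightarrow> odd j \<Longrightarrow> j \<noteq> n - 1 \<Longrightarrow> companion_eigvec_entry n c r \<epsilon> i j = (if i = j then 1 else 0)"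
  by (auto simp: companion_eigvec_entry_def Let_def)

lemma companion_eigvec_entry_eigen:
  fixes c r :: "nat \<Rightarrow> 'a :: field"
  assumes n: "even n" "n > 0"
    and odd_nodes: "\<And>i. odd i \<Longrightarrow> c i = \<epsilon>"
    and even_nodes: "\<And>i. i < n \<Longrightarrow> even i \<Longrightarrow> c i \<noteq> \<epsilon>"
    and r_last: "r (n - 1) \<noteq> 0"
    and last_even_node: "c (n - 2) \<noteq> \<epsilon> - r (n - 1)"
    and i: "i < n" and j: "j < n"
  defines "ue \<equiv> companion_eigvec_entry n c r \<epsilon>"
  shows "c i * ue i j + (if odd i then ue (i - 1) j - r i * ue (n - 1) j else 0)
    = (if j = n - 1 then \<epsilon> - r (n - 1) else c j) * ue i j"
proof -
  define K where "K = n - 1"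
  define d where "d = c (n - 2)"
  define \<gamma> where "\<gamma> = 1 / (d - (\<epsilon> - r K))"
  define \<delta> where "\<delta> i = - r i * \<gamma> / (d - \<epsilon>)" for i
  have ue: "ue i j =
    (if even i then (if i = j then 1 else 0)
     else if j = K then (if i = K then 1 else r i / r K)
     else if j = n - 2 then (if i = K then \<gamma> else \<delta> i)
     else if even j then (if i = Suc j then 1 / (c j - \<epsilon>) else 0)
     else if i = j then 1 else 0)" for i j
    by (simp add: ue_def companion_eigvec_entry_def Let_def K_def d_def \<gamma>_def \<delta>_def)
  have K: "odd K" "K < n" "Suc (n - 2) = K" "even (n - 2)" "n - 2 < n" "n - 2 \<noteq> K"
    using n by (auto simp: K_def)
  have rK: "r K \<noteq> 0" and d\<epsilon>: "d \<noteq> \<epsilon>" and dK: "d - (\<epsilon> - r K) \<noteq> 0"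
    using r_last even_nodes[OF K(5,4)] last_even_node by (simp_all add: K_def d_def)
  have ue_K: "ue K j = (if j = K then 1 else if j = n - 2 then \<gamma> else 0)" for j
    using K by (auto simp: ue)
  have "c i * ue i j + (if odd i then ue (i - 1) j - r i * ue K j else 0)
    = (if j = K then \<epsilon> - r K else c j) * ue i j"
  proof (cases "even i")
    case True
    then show ?thesis
      using K by (auto simp: ue_def companion_eigvec_entry_even_row)
  next
    case odd_i: False
    have "even (i - 1)" "i - 1 \<noteq> K" "i - 1 = n - 2 \<longleftrightarrow> i = K"
      using odd_i K by presburger+
    then have prev: "ue (i - 1) j = (if i - 1 = j then 1 else 0)"
      by (simp add: ue)
    consider "j = K" | "j = n - 2" | "even j" "j \<noteq> n - 2" | "odd j" "j \<noteq> K"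
      by blast
    then show ?thesis
    proof cases
      case 1
      then show ?thesis
        using odd_i rK K \<open>i - 1 \<noteq> K\<close> by (simp add: prev ue_K ue odd_nodes field_simps)
    next
      case 2
      have "\<gamma> * (d - (\<epsilon> - r K)) = 1"
        using dK by (simp add: \<gamma>_def)
      moreover have "d * \<gamma> - (\<epsilon> * \<gamma> + (1 - r K * \<gamma>)) = \<gamma> * (d - (\<epsilon> - r K)) - 1"
        by (simp add: algebra_simps)
      ultimately have "\<epsilon> * \<gamma> + (1 - r K * \<gamma>) = d * \<gamma>"
        by simp
      moreover have "\<epsilon> * \<delta> i - r i * \<gamma> = d * \<delta> i"
        using d\<epsilon> by (simp add: \<delta>_def field_simps)
      moreover have "c (n - 2) = d"
        by (simp add: d_def)
      ultimately show ?thesis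
        using 2 odd_i K prev \<open>i - 1 = n - 2 \<longleftrightarrow> i = K\<close>
        by (cases "i = K") (simp_all add: ue ue_K odd_nodes)
    next
      case 3
      then have "c j \<noteq> \<epsilon>"
        using even_nodes j by blast
      then show ?thesis
        using 3 odd_i K by (auto simp: prev ue_K ue odd_nodes field_simps)
    next
      case 4
      then show ?thesis
        using odd_i K n(1) by (auto simp: prev ue_K ue_def companion_eigvec_entry_odd_col K_def odd_nodes)
    qed
  qed
  then show ?thesis
    by (simp only: K_def)
qed

lemma companion_eigvec_mat_injective:
  assumes n: "even n" "n > 0" and x: "x \<in> carrier_vec n"
    and zero: "mat n n (\<lambda>(i, j). companion_eigvec_entry n c r \<epsilon> i j) *\<^sub>v x = 0\<^sub>v n"
  shows "x = 0\<^sub>v n"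
proof -
  txt \<open>The even coordinates vanish first, then the last one, then the remaining odd ones.\<close>
  let ?ue = "companion_eigvec_entry n c r \<epsilon>"
  have row: "(\<Sum>j<n. ?ue i j * x $ j) = 0" if "i < n" for i
    using arg_cong[OF zero, of "\<lambda>w. w $ i"] that x by (simp add: scalar_prod_def atLeast0LessThan)
  have x_even: "x $ i = 0" if "i < n" "even i" for i
    using row[OF that(1)] that
    by (simp add: companion_eigvec_entry_even_row sum_lessThan_eq_single[of i])
  have x_odd: "x $ i = 0" if i: "i < n" "odd i" and last: "i = n - 1 \<or> x $ (n - 1) = 0" for i
  proof -
    have "?ue i j * x $ j = 0" if "j < n" "j \<noteq> i" for j
      using that x_even last n(1) companion_eigvec_entry_odd_col[of n j c r \<epsilon> i]
      by (cases "even j"; cases "j = n - 1") auto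
    then have "(\<Sum>j<n. ?ue i j * x $ j) = ?ue i i * x $ i"
      using i by (intro sum_lessThan_eq_single) auto
    moreover have "?ue i i = 1"
      using i n by (auto simp: companion_eigvec_entry_def Let_def)
    ultimately show ?thesis
      using row[OF i(1)] by simp
  qed
  have "x $ (n - 1) = 0"
    using x_odd n by simp
  then show ?thesis
    using x x_even x_odd by (intro eq_vecI) auto
qed

lemma corrected_companion_diagonalizable:
  fixes c r :: "nat \<Rightarrow> 'a :: field"
  assumes n: "even n" "n > 0"
    and odd_nodes: "\<And>i. odd i \<Longrightarrow> c i = \<epsilon>"
    and even_nodes: "\<And>i. i < n \<Longrightarrow> even i \<Longrightarrow> c i \<noteq> \<epsilon>"
    and r_last: "r (n - 1) \<noteq> 0"
    and last_even_node: "c (n - 2) \<noteq> \<epsilon> - r (n - 1)"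
  shows "diagonalizable n (corrected_companion_mat n c r)"
proof -
  define U where "U = mat n n (\<lambda>(i, j). companion_eigvec_entry n c r \<epsilon> i j)"
  have U: "U \<in> carrier_mat n n"
    by (simp add: U_def)
  have col_U: "col U j = vec n (\<lambda>i. companion_eigvec_entry n c r \<epsilon> i j)" if "j < n" for j
    using that by (auto simp: U_def)
  have "corrected_companion_mat n c r *\<^sub>v col U j = (if j = n - 1 then \<epsilon> - r (n - 1) else c j) \<cdot>\<^sub>v col U j"
    if j: "j < n" for j
  proof (rule eq_vecI)
    fix i assume "i < dim_vec ((if j = n - 1 then \<epsilon> - r (n - 1) else c j) \<cdot>\<^sub>v col U j)"
    then have i: "i < n"
      using U by simp
    have "col U j \<in> carrier_vec n"
      using j by (simp add: col_U)
    then have "(corrected_companion_mat n c r *\<^sub>v col U j) $ i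
        = c i * col U j $ i + (if odd i then col U j $ (i - 1) - r i * col U j $ (n - 1) else 0)"
      using i by (rule corrected_companion_mult_vec_index)
    also have "\<dots> = c i * companion_eigvec_entry n c r \<epsilon> i j
        + (if odd i then companion_eigvec_entry n c r \<epsilon> (i - 1) j
           - r i * companion_eigvec_entry n c r \<epsilon> (n - 1) j else 0)"
      using i j n by (simp add: col_U)
    also have "\<dots> = (if j = n - 1 then \<epsilon> - r (n - 1) else c j) * companion_eigvec_entry n c r \<epsilon> i j"
      using assms i j by (rule companion_eigvec_entry_eigen)
    finally show "(corrected_companion_mat n c r *\<^sub>v col U j) $ i
        = ((if j = n - 1 then \<epsilon> - r (n - 1) else c j) \<cdot>\<^sub>v col U j) $ i"
      using i j by (simp add: col_U)
  qed (use U in simp)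
  moreover have "x = 0\<^sub>v n" if "x \<in> carrier_vec n" "U *\<^sub>v x = 0\<^sub>v n" for x
    using companion_eigvec_mat_injective[OF n that(1)] that(2) by (simp add: U_def)
  ultimately show ?thesis
    using U by (intro diagonalizable_if_eigenbasis[OF corrected_companion_mat_carrier]) auto
qed

lemma one_neq_minus_one_if_card_3:
  assumes "card (UNIV :: 'a :: field set) = 3"
  shows "(1 :: 'a) \<noteq> - 1"
proof
  assume char2: "(1 :: 'a) = - 1"
  have "\<not> UNIV \<subseteq> {0, 1 :: 'a}"
    using assms card_mono[of "{0, 1 :: 'a}" UNIV] by (auto simp: card_insert_if)
  then obtain a :: 'a where a: "a \<noteq> 0" "a \<noteq> 1"
    by blast
  have "finite (UNIV :: 'a set)"
    using assms card.infinite by fastforce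
  then have "UNIV = {0, 1, a}"
    using a assms by (intro card_subset_eq[symmetric]) auto
  moreover have "a + 1 \<notin> {0, 1, a}"
    using a char2 by (auto simp: add_eq_0_iff2)
  ultimately show False
    by blast
qed

lemma newton_nodes_exist:
  fixes n :: nat
  assumes one: "(1 :: 'a) \<noteq> - 1" and n: "even n" "n > 0"
  obtains c :: "nat \<Rightarrow> 'a :: field" and \<epsilon> :: 'a
  where "\<And>i. odd i \<Longrightarrow> c i = \<epsilon>" "\<And>i. i < n \<Longrightarrow> even i \<Longrightarrow> c i \<noteq> \<epsilon>"
    "(\<Sum>i<n. c i) = 1" "c (n - 2) \<noteq> \<epsilon> - 1"
proof (cases "n = 2")
  txt \<open>For n = 2 the indices 0 and n - 2 coincide, so that case needs its own nodes.\<close>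
  case True
  let ?c = "\<lambda>i. if odd i then 0 else 1 :: 'a"
  have "(\<Sum>i<n. ?c i) = 1"
    using True by (simp add: numeral_2_eq_2)
  with True one show ?thesis
    by (intro that[of ?c 0]) (auto simp: eq_neg_iff_add_eq_0)
next
  case False
  let ?c = "\<lambda>i. if odd i then 1 else if i = 0 then 0 else - 1 :: 'a"
  have sum: "(\<Sum>i<2 * k. ?c i) = 1" if "k \<ge> 1" for k :: nat
    using that
  proof (induction k rule: dec_induct)
    case base
    then show ?case
      by (simp add: numeral_2_eq_2)
  next
    case (step k)
    have "(\<Sum>i<2 * Suc k. ?c i) = (\<Sum>i<2 * k. ?c i) + ?c (2 * k) + ?c (Suc (2 * k))"
      by simp
    also have "?c (2 * k) = - 1"
      using step.hyps(1) by simp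
    also have "?c (Suc (2 * k)) = 1"
      by simp
    finally show ?case
      using step.IH by simp
  qed
  have "n = 2 * (n div 2)" "n div 2 \<ge> 1" "n - 2 \<noteq> 0" "even (n - 2)"
    using n False by auto
  with one sum show ?thesis
    by (intro that[of ?c 1]) (auto simp: eq_neg_iff_add_eq_0)
qed

theorem proposition3p1:
  fixes A :: "'a :: field mat" and n :: nat
  assumes "card (UNIV :: 'a set) = 3"
    and "n > 0" and "even n"
    and "A \<in> carrier_mat n n"
    and "non_derogatory n A"
    and "mat_trace A = 0"
  shows "\<exists>M \<in> carrier_mat n n. M * M = 0\<^sub>m n n \<and> diagonalizable n (A + M)"
proof -
  have "(1 :: 'a) \<noteq> - 1"
    using assms(1) by (rule one_neq_minus_one_if_card_3)
  then obtain c :: "nat \<Rightarrow> 'a" and \<epsilon> where nodes: "\<And>i. odd i \<Longrightarrow> c i = \<epsilon>" "\<And>i. i < n \<Longrightarrow> even i \<Longrightarrow> c i \<noteq> \<epsilon>"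
    "(\<Sum>i<n. c i) = 1" "c (n - 2) \<noteq> \<epsilon> - 1"
    using assms(3,2) by (rule newton_nodes_exist) blast
  obtain r where sim: "similar_mat A (newton_companion_mat n c r)"
    using assms(4,2,5) by (rule non_derogatory_similar_newton_companion)
  have "1 - r (n - 1) = 0"
    using mat_trace_similar[OF sim] mat_trace_newton_companion[OF assms(2), of c r] assms(6) nodes(3)
    by simp
  then have "r (n - 1) = 1"
    by simp
  then have "diagonalizable n (newton_companion_mat n c r + square_zero_correction n r)"
    unfolding newton_companion_plus_correction
    using assms(2,3) nodes by (intro corrected_companion_diagonalizable) auto
  moreover obtain M where M: "M \<in> carrier_mat n n" "M * M = 0\<^sub>m n n"
    and "similar_mat (A + M) (newton_companion_mat n c r + square_zero_correction n r)"
    using sim assms(4) square_zero_correction_carrier square_zero_correction_square[OF assms(3)]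
    by (rule similar_mat_add_square_zero)
  ultimately have "diagonalizable n (A + M)"
    using assms(4) M(1) by (intro diagonalizable_similar[of "A + M"]) auto
  with M show ?thesis
    by blast
qed

end
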